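(* Let $\nu>0$, let $T>0$, and let $u(x,t)$, $\ell(x,t)$, $v(x,t)$ (vector valued, three components each), $n(x,t)$ (scalar) and $f(x,t)$ (vector valued) be smooth functions on $\mathbb{R}^3\times[0,T]$. Put $A(x,t)=x+\ell(x,t)$, let $\nabla A$ denote the matrix with entries $(\nabla A)_{mj}=\partial_j A^m$, assume $\nabla A(x,t)$ is invertible for all $(x,t)$, and let $Q=(\nabla A)^{-1}$. Let $\Gamma=\partial_t+u\cdot\nabla-\nu\Delta$ (acting componentwise on vectors), and define $$C_{m,k;i}=Q_{ji}\,\partial_j\partial_k A^m .$$ Assume that $$u^i=(\partial_iA^m)v_m-\partial_i n,$$ that $$(\partial_t+u\cdot\nabla-\nu\Delta)\ell+u=0,$$ and that $$\Gamma v_i=2\nu\, C_{m,k;i}\,\partial_k v_m+Q_{ji}f_j,\qquad i=1,2,3.$$ Then $u$ satisfies $$\partial_t u+u\cdot\nabla u-\nu\Delta u+\nabla p=f$$ with pressure $p=\Gamma n+\frac{|u|^2}{2}+c$, where $c$ is an arbitrary constant.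
   Context: Repeated indices are summed over $\{1,2,3\}$; $\partial_i$ denotes differentiation in the $i$-th Eulerian Cartesian coordinate. No divergence-free condition on $u$ is assumed. *)

theory Defs
  imports "HOL-Analysis.Analysis"
begin

(* Directional derivative of g at z along e, taken within the set S
   (one-sided at boundary points, e.g. at t = 0 and t = T). *)
definition dderiv :: "('a::real_normed_vector \<Rightarrow> real) \<Rightarrow> 'a set \<Rightarrow> 'a \<Rightarrow> 'a \<Rightarrow> real" where
  "dderiv g S e z =
     (THE D. ((\<lambda>h. g (z + h *\<^sub>R e)) has_real_derivative D) (at 0 within {h. z + h *\<^sub>R e \<in> S}))"

fun iter_dderiv :: "('a::real_normed_vector \<Rightarrow> real) \<Rightarrow> 'a set \<Rightarrow> 'a list \<Rightarrow> 'a \<Rightarrow> real" where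
  "iter_dderiv g S [] = g"
| "iter_dderiv g S (e # es) = dderiv (iter_dderiv g S es) S e"

definition smooth_on :: "'a::euclidean_space set \<Rightarrow> ('a \<Rightarrow> real) \<Rightarrow> bool" where
  "smooth_on S g \<longleftrightarrow>
     (\<forall>es. set es \<subseteq> Basis \<longrightarrow>
        continuous_on S (iter_dderiv g S es) \<and>
        (\<forall>e\<in>Basis. \<forall>z\<in>S. \<exists>D.
           ((\<lambda>h. iter_dderiv g S es (z + h *\<^sub>R e)) has_real_derivative D)
             (at 0 within {h. z + h *\<^sub>R e \<in> S})))"

definition dom :: "real \<Rightarrow> ((real^3) \<times> real) set" where
  "dom T = UNIV \<times> {0..T}"

type_synonym sfield = "real^3 \<Rightarrow> real \<Rightarrow> real"
type_synonym vfield = "real^3 \<Rightarrow> real \<Rightarrow> real^3"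

definition smooth_s :: "real \<Rightarrow> sfield \<Rightarrow> bool" where
  "smooth_s T f \<longleftrightarrow> smooth_on (dom T) (\<lambda>(y, s). f y s)"

definition smooth_v :: "real \<Rightarrow> vfield \<Rightarrow> bool" where
  "smooth_v T f \<longleftrightarrow> (\<forall>i. smooth_s T (\<lambda>y s. f y s $ i))"

definition dx :: "real \<Rightarrow> 3 \<Rightarrow> sfield \<Rightarrow> sfield" where
  "dx T j f x t = dderiv (\<lambda>(y, s). f y s) (dom T) (axis j 1, 0) (x, t)"

definition dt :: "real \<Rightarrow> sfield \<Rightarrow> sfield" where
  "dt T f x t = dderiv (\<lambda>(y, s). f y s) (dom T) (0, 1) (x, t)"

definition comp :: "vfield \<Rightarrow> 3 \<Rightarrow> sfield" where
  "comp w i = (\<lambda>x t. w x t $ i)"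

definition lap :: "real \<Rightarrow> sfield \<Rightarrow> sfield" where
  "lap T f x t = (\<Sum>k\<in>UNIV. dx T k (dx T k f) x t)"

definition Gam :: "real \<Rightarrow> real \<Rightarrow> vfield \<Rightarrow> sfield \<Rightarrow> sfield" where
  "Gam T \<nu> u f x t =
     dt T f x t + (\<Sum>k\<in>UNIV. u x t $ k * dx T k f x t) - \<nu> * lap T f x t"

definition gradm :: "real \<Rightarrow> vfield \<Rightarrow> real^3 \<Rightarrow> real \<Rightarrow> real^3^3" where
  "gradm T w x t = (\<chi> m j. dx T j (comp w m) x t)"

end

theory Submission
  imports Defs
begin

(* Write A = x + l, B_im = d_i A^m and Gamma = d_t + u.grad - nu Laplacian.  Gamma satisfies the
   product rule up to the cross term -2 nu grad F . grad G, and d_i (Gamma F) = Gamma (d_i F)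
   + (d_i u_k)(d_k F).  Since Gamma x_m = u_m and Gamma l_m = -u_m, Gamma A = 0 and hence
   Gamma B_im = -(d_i u_k) B_km.  Applying Gamma to u_i = B_im v_m - d_i n, the cross term
   -2 nu (d_k B_im)(d_k v_m) is cancelled by the C-term of the equation for v contracted with B_im,
   because Q B = I turns Q_ji d_j d_k A^m into d_i d_k A^m.  What remains is
   Gamma u_i = f_i - u_k d_i u_k - d_i (Gamma n) = f_i - d_i p.
   The only analytic input is the symmetry of second derivatives for the one-sided partial
   derivatives on R^3 x [0,T]: it follows from the mean value theorem in the interior and extends
   to the boundary by continuity. *)

section \<open>Directional derivatives within a set\<close>

definition has_dderiv :: "('a::real_normed_vector \<Rightarrow> real) \<Rightarrow> 'a set \<Rightarrow> 'a \<Rightarrow> 'a \<Rightarrow> real \<Rightarrow> bool" where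
  "has_dderiv g S e z D \<longleftrightarrow>
     ((\<lambda>h. g (z + h *\<^sub>R e)) has_real_derivative D) (at 0 within {h. z + h *\<^sub>R e \<in> S})"

lemma has_dderiv_cong:
  assumes "z \<in> S" "\<And>w. w \<in> S \<Longrightarrow> f w = g w"
  shows "has_dderiv f S e z D \<longleftrightarrow> has_dderiv g S e z D"
  unfolding has_dderiv_def by (rule has_field_derivative_cong_ev) (auto simp: assms)

lemma dderiv_cong:
  assumes "z \<in> S" "\<And>w. w \<in> S \<Longrightarrow> f w = g w"
  shows "dderiv f S e z = dderiv g S e z"
proof -
  have "has_dderiv f S e z D \<longleftrightarrow> has_dderiv g S e z D" for D
    using assms by (rule has_dderiv_cong)
  then show ?thesis unfolding dderiv_def has_dderiv_def by simp
qed

lemma has_dderiv_add: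
  "has_dderiv f S e z Df \<Longrightarrow> has_dderiv g S e z Dg \<Longrightarrow> has_dderiv (\<lambda>w. f w + g w) S e z (Df + Dg)"
  unfolding has_dderiv_def by (rule DERIV_add)

lemma has_dderiv_diff:
  "has_dderiv f S e z Df \<Longrightarrow> has_dderiv g S e z Dg \<Longrightarrow> has_dderiv (\<lambda>w. f w - g w) S e z (Df - Dg)"
  unfolding has_dderiv_def by (rule DERIV_diff)

lemma has_dderiv_mult:
  assumes "has_dderiv f S e z Df" "has_dderiv g S e z Dg"
  shows "has_dderiv (\<lambda>w. f w * g w) S e z (f z * Dg + Df * g z)"
  using DERIV_mult[OF assms[unfolded has_dderiv_def]]
  by (simp add: has_dderiv_def algebra_simps)

lemma has_dderiv_sum:
  "(\<And>k. k \<in> K \<Longrightarrow> has_dderiv (f k) S e z (D k)) \<Longrightarrow>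
    has_dderiv (\<lambda>w. \<Sum>k\<in>K. f k w) S e z (\<Sum>k\<in>K. D k)"
  unfolding has_dderiv_def by (rule DERIV_sum)

lemma has_dderiv_const: "has_dderiv (\<lambda>w. c) S e z 0"
  by (simp add: has_dderiv_def)

lemma has_dderiv_linear:
  assumes "bounded_linear L"
  shows "has_dderiv L S e z (L e)"
proof -
  have "(\<lambda>h. L (z + h *\<^sub>R e)) = (\<lambda>h. L z + h * L e)"
    using assms by (auto simp: bounded_linear.linear linear_add linear_scale)
  then show ?thesis
    unfolding has_dderiv_def by (auto intro!: derivative_eq_intros)
qed

lemma smooth_on_imp_continuous_on: "smooth_on S g \<Longrightarrow> continuous_on S g"
  unfolding smooth_on_def by (metis empty_subsetI iter_dderiv.simps(1) list.set(1))

lemma smooth_on_imp_has_dderiv: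
  "smooth_on S g \<Longrightarrow> e \<in> Basis \<Longrightarrow> z \<in> S \<Longrightarrow> \<exists>D. has_dderiv g S e z D"
  unfolding smooth_on_def has_dderiv_def by (metis empty_subsetI iter_dderiv.simps(1) list.set(1))

lemma iter_dderiv_dderiv: "iter_dderiv (dderiv g S e) S es = iter_dderiv g S (es @ [e])"
  by (induction es) auto

lemma smooth_on_dderiv:
  assumes "smooth_on S g" "e \<in> Basis"
  shows "smooth_on S (dderiv g S e)"
  using assms unfolding smooth_on_def iter_dderiv_dderiv by auto

(* Closing smooth_on under products directly would need the Leibniz rule for iterated
   derivatives; instead one shows that this class is closed under differentiation. *)
inductive smooth_generated :: "'a::euclidean_space set \<Rightarrow> ('a \<Rightarrow> real) \<Rightarrow> bool" for S where
  smooth: "smooth_on S g \<Longrightarrow> smooth_generated S g"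
| add: "smooth_generated S f \<Longrightarrow> smooth_generated S g \<Longrightarrow> smooth_generated S (\<lambda>z. f z + g z)"
| mult: "smooth_generated S f \<Longrightarrow> smooth_generated S g \<Longrightarrow> smooth_generated S (\<lambda>z. f z * g z)"
| const: "smooth_generated S (\<lambda>z. c)"
| linear: "bounded_linear L \<Longrightarrow> smooth_generated S L"

(* The first assumption makes one-sided derivatives at boundary points unique; the second lets
   the symmetry of second derivatives pass from the interior to the boundary. *)
locale dderiv_domain =
  fixes S :: "'a::euclidean_space set"
  assumes nontrivial_line: "z \<in> S \<Longrightarrow> e \<in> Basis \<Longrightarrow> at 0 within {h. z + h *\<^sub>R e \<in> S} \<noteq> bot"
    and closure_interior: "closure (interior S) = S"
begin

lemma dderiv_eqI:
  assumes "has_dderiv g S e z D" "z \<in> S" "e \<in> Basis"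
  shows "dderiv g S e z = D"
  using assms(1) has_field_derivative_unique[OF _ _ nontrivial_line[OF assms(2,3)]]
  unfolding dderiv_def has_dderiv_def by blast

lemma has_dderiv_dderiv:
  assumes "smooth_on S g" "z \<in> S" "e \<in> Basis"
  shows "has_dderiv g S e z (dderiv g S e z)"
  using smooth_on_imp_has_dderiv[OF assms(1,3,2)] dderiv_eqI[OF _ assms(2,3)] by metis

lemma smooth_generated_continuous_on: "smooth_generated S g \<Longrightarrow> continuous_on S g"
  by (induction rule: smooth_generated.induct)
    (auto intro: smooth_on_imp_continuous_on continuous_on_add continuous_on_mult linear_continuous_on)

lemma smooth_generated_has_dderiv:
  assumes "smooth_generated S g" "e \<in> Basis"
  shows "\<exists>g'. smooth_generated S g' \<and> (\<forall>z\<in>S. has_dderiv g S e z (g' z))"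
  using assms(1)
proof induction
  case (smooth g)
  show ?case
  proof (intro exI conjI ballI)
    show "smooth_generated S (dderiv g S e)"
      using smooth assms(2) by (intro smooth_generated.smooth smooth_on_dderiv)
    show "has_dderiv g S e z (dderiv g S e z)" if "z \<in> S" for z
      using smooth that assms(2) by (rule has_dderiv_dderiv)
  qed
next
  case (add f g)
  then obtain f' g' where "smooth_generated S f'" "smooth_generated S g'"
    "\<forall>z\<in>S. has_dderiv f S e z (f' z)" "\<forall>z\<in>S. has_dderiv g S e z (g' z)"
    by blast
  then show ?case
    by (intro exI[of _ "\<lambda>z. f' z + g' z"]) (simp add: smooth_generated.add has_dderiv_add)
next
  case (mult f g)
  then obtain f' g' where "smooth_generated S f'" "smooth_generated S g'"
    "\<forall>z\<in>S. has_dderiv f S e z (f' z)" "\<forall>z\<in>S. has_dderiv g S e z (g' z)"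
    by blast
  with mult.hyps show ?case
    by (intro exI[of _ "\<lambda>z. f z * g' z + f' z * g z"])
      (simp add: smooth_generated.add smooth_generated.mult has_dderiv_mult)
next
  case (const c)
  show ?case
    by (intro exI[of _ "\<lambda>z. 0"]) (simp add: smooth_generated.const has_dderiv_const)
next
  case (linear L)
  then show ?case
    by (intro exI[of _ "\<lambda>z. L e"]) (simp add: smooth_generated.const has_dderiv_linear)
qed

lemma smooth_generated_iter_dderiv:
  assumes "smooth_generated S g" "set es \<subseteq> Basis"
  shows "\<exists>g'. smooth_generated S g' \<and> (\<forall>z\<in>S. iter_dderiv g S es z = g' z)"
  using assms(2)
proof (induction es)
  case Nil
  then show ?case using assms(1) by auto
next
  case (Cons e es)
  then obtain g1 where g1: "smooth_generated S g1" "\<forall>z\<in>S. iter_dderiv g S es z = g1 z"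
    by auto
  from Cons.prems have "e \<in> Basis" by simp
  then obtain g2 where g2: "smooth_generated S g2" "\<forall>z\<in>S. has_dderiv g1 S e z (g2 z)"
    using smooth_generated_has_dderiv[OF g1(1)] by blast
  have "iter_dderiv g S (e # es) z = g2 z" if "z \<in> S" for z
  proof -
    have "iter_dderiv g S (e # es) z = dderiv g1 S e z"
      using g1(2) that by (auto intro: dderiv_cong)
    also have "\<dots> = g2 z"
      using g2(2) that Cons.prems by (simp add: dderiv_eqI)
    finally show ?thesis .
  qed
  with g2(1) show ?case by blast
qed

lemma smooth_generated_imp_smooth_on:
  assumes "smooth_generated S g"
  shows "smooth_on S g"
  unfolding smooth_on_def
proof (intro allI impI conjI ballI)
  fix es :: "'a list"
  assume "set es \<subseteq> Basis"
  then obtain g' where g': "smooth_generated S g'" "\<forall>z\<in>S. iter_dderiv g S es z = g' z"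
    using smooth_generated_iter_dderiv[OF assms] by blast
  show "continuous_on S (iter_dderiv g S es)"
    using smooth_generated_continuous_on[OF g'(1)] by (rule continuous_on_eq) (use g'(2) in simp)
  fix e z :: 'a
  assume "e \<in> Basis" "z \<in> S"
  then obtain D where "has_dderiv g' S e z D"
    using smooth_generated_has_dderiv[OF g'(1)] by blast
  with g'(2) \<open>z \<in> S\<close> have "has_dderiv (iter_dderiv g S es) S e z D"
    using has_dderiv_cong[of z S "iter_dderiv g S es" g'] by simp
  then show "\<exists>D. ((\<lambda>h. iter_dderiv g S es (z + h *\<^sub>R e)) has_real_derivative D)
      (at 0 within {h. z + h *\<^sub>R e \<in> S})"
    unfolding has_dderiv_def by (rule exI)
qed

lemma smooth_on_add:
  assumes "smooth_on S f" "smooth_on S g"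
  shows "smooth_on S (\<lambda>z. f z + g z)"
  using smooth_generated.add[OF smooth_generated.smooth[OF assms(1)] smooth_generated.smooth[OF assms(2)]]
  by (rule smooth_generated_imp_smooth_on)

lemma smooth_on_mult:
  assumes "smooth_on S f" "smooth_on S g"
  shows "smooth_on S (\<lambda>z. f z * g z)"
  using smooth_generated.mult[OF smooth_generated.smooth[OF assms(1)] smooth_generated.smooth[OF assms(2)]]
  by (rule smooth_generated_imp_smooth_on)

lemma smooth_on_const: "smooth_on S (\<lambda>z. c)"
  by (rule smooth_generated_imp_smooth_on[OF smooth_generated.const])

lemma smooth_on_linear: "bounded_linear L \<Longrightarrow> smooth_on S L"
  by (rule smooth_generated_imp_smooth_on[OF smooth_generated.linear])

lemma smooth_on_diff:
  assumes "smooth_on S f" "smooth_on S g"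
  shows "smooth_on S (\<lambda>z. f z - g z)"
  using smooth_on_add[OF assms(1) smooth_on_mult[OF smooth_on_const[of "-1"] assms(2)]] by simp

lemma smooth_on_sum:
  "finite K \<Longrightarrow> (\<And>k. k \<in> K \<Longrightarrow> smooth_on S (f k)) \<Longrightarrow> smooth_on S (\<lambda>z. \<Sum>k\<in>K. f k z)"
  by (induction K rule: finite_induct) (simp_all add: smooth_on_const smooth_on_add)

lemma dderiv_add:
  "smooth_on S f \<Longrightarrow> smooth_on S g \<Longrightarrow> z \<in> S \<Longrightarrow> e \<in> Basis \<Longrightarrow>
    dderiv (\<lambda>w. f w + g w) S e z = dderiv f S e z + dderiv g S e z"
  by (intro dderiv_eqI has_dderiv_add has_dderiv_dderiv)

lemma dderiv_diff:
  "smooth_on S f \<Longrightarrow> smooth_on S g \<Longrightarrow> z \<in> S \<Longrightarrow> e \<in> Basis \<Longrightarrow>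
    dderiv (\<lambda>w. f w - g w) S e z = dderiv f S e z - dderiv g S e z"
  by (intro dderiv_eqI has_dderiv_diff has_dderiv_dderiv)

lemma dderiv_mult:
  "smooth_on S f \<Longrightarrow> smooth_on S g \<Longrightarrow> z \<in> S \<Longrightarrow> e \<in> Basis \<Longrightarrow>
    dderiv (\<lambda>w. f w * g w) S e z = f z * dderiv g S e z + dderiv f S e z * g z"
  by (intro dderiv_eqI has_dderiv_mult has_dderiv_dderiv)

lemma dderiv_sum:
  "(\<And>k. k \<in> K \<Longrightarrow> smooth_on S (f k)) \<Longrightarrow> z \<in> S \<Longrightarrow> e \<in> Basis \<Longrightarrow>
    dderiv (\<lambda>w. \<Sum>k\<in>K. f k w) S e z = (\<Sum>k\<in>K. dderiv (f k) S e z)"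
  by (intro dderiv_eqI has_dderiv_sum has_dderiv_dderiv)

lemma dderiv_const: "z \<in> S \<Longrightarrow> e \<in> Basis \<Longrightarrow> dderiv (\<lambda>w. c) S e z = 0"
  by (intro dderiv_eqI has_dderiv_const)

lemma dderiv_linear: "bounded_linear L \<Longrightarrow> z \<in> S \<Longrightarrow> e \<in> Basis \<Longrightarrow> dderiv L S e z = L e"
  by (intro dderiv_eqI has_dderiv_linear)

section \<open>Symmetry of second derivatives\<close>

lemma has_real_derivative_dderiv_line:
  assumes g: "smooth_on S g" and e: "e \<in> Basis" and w: "p + a *\<^sub>R e \<in> interior S"
  shows "((\<lambda>a. g (p + a *\<^sub>R e)) has_real_derivative dderiv g S e (p + a *\<^sub>R e)) (at a)"
proof -
  let ?w = "p + a *\<^sub>R e"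
  have "at 0 within {h. ?w + h *\<^sub>R e \<in> S} = at (0::real)"
  proof (rule at_within_open_subset)
    show "open ((\<lambda>h. ?w + h *\<^sub>R e) -` interior S)"
      by (intro open_vimage open_interior continuous_intros)
  qed (use w interior_subset in auto)
  moreover have "has_dderiv g S e ?w (dderiv g S e ?w)"
    using g w e interior_subset by (blast intro: has_dderiv_dderiv)
  ultimately have "((\<lambda>h. g (?w + h *\<^sub>R e)) has_real_derivative dderiv g S e ?w) (at 0)"
    unfolding has_dderiv_def by simp
  then show ?thesis
    using DERIV_shift[of "\<lambda>a. g (p + a *\<^sub>R e)" _ 0 a] by (simp add: algebra_simps)
qed

lemma second_difference_mvt:
  assumes g: "smooth_on S g" and e1: "e1 \<in> Basis" and e2: "e2 \<in> Basis" and h: "h > 0"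
    and square: "\<And>a b. a \<in> {0..h} \<Longrightarrow> b \<in> {0..h} \<Longrightarrow> z + a *\<^sub>R e1 + b *\<^sub>R e2 \<in> interior S"
  obtains a b where "a \<in> {0..h}" "b \<in> {0..h}"
    "g (z + h *\<^sub>R e1 + h *\<^sub>R e2) - g (z + h *\<^sub>R e1) - g (z + h *\<^sub>R e2) + g z
       = h * h * dderiv (dderiv g S e1) S e2 (z + a *\<^sub>R e1 + b *\<^sub>R e2)"
proof -
  let ?g1 = "dderiv g S e1"
  have swap: "z + a *\<^sub>R e1 + b *\<^sub>R e2 = (z + b *\<^sub>R e2) + a *\<^sub>R e1" for a b
    by (simp add: algebra_simps)
  define \<psi> where "\<psi> a = g ((z + h *\<^sub>R e2) + a *\<^sub>R e1) - g (z + a *\<^sub>R e1)" for a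
  define \<psi>' where "\<psi>' a = ?g1 ((z + h *\<^sub>R e2) + a *\<^sub>R e1) - ?g1 (z + a *\<^sub>R e1)" for a
  have "(\<psi> has_real_derivative \<psi>' a) (at a)" if "0 \<le> a" "a \<le> h" for a
  proof -
    have "(z + h *\<^sub>R e2) + a *\<^sub>R e1 \<in> interior S" "z + a *\<^sub>R e1 \<in> interior S"
      using that h square[of a h] square[of a 0] unfolding swap by auto
    then show ?thesis
      unfolding \<psi>_def \<psi>'_def by (intro DERIV_diff has_real_derivative_dderiv_line[OF g e1])
  qed
  then obtain a where a: "0 < a" "a < h" "\<psi> h - \<psi> 0 = (h - 0) * \<psi>' a"
    using MVT2[OF h, of \<psi> \<psi>'] by auto
  have dch: "((\<lambda>b. ?g1 (z + a *\<^sub>R e1 + b *\<^sub>R e2)) has_real_derivative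
      dderiv ?g1 S e2 (z + a *\<^sub>R e1 + b *\<^sub>R e2)) (at b)" if "0 \<le> b" "b \<le> h" for b
  proof (rule has_real_derivative_dderiv_line)
    show "z + a *\<^sub>R e1 + b *\<^sub>R e2 \<in> interior S"
      using a that by (intro square) auto
  qed (use g e1 e2 in \<open>auto intro: smooth_on_dderiv\<close>)
  obtain b where b: "0 < b" "b < h"
    "?g1 (z + a *\<^sub>R e1 + h *\<^sub>R e2) - ?g1 (z + a *\<^sub>R e1 + 0 *\<^sub>R e2)
       = (h - 0) * dderiv ?g1 S e2 (z + a *\<^sub>R e1 + b *\<^sub>R e2)"
    using MVT2[OF h dch] by blast
  have "g (z + h *\<^sub>R e1 + h *\<^sub>R e2) - g (z + h *\<^sub>R e1) - g (z + h *\<^sub>R e2) + g z = \<psi> h - \<psi> 0"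
    unfolding \<psi>_def swap by simp
  also have "\<dots> = h * h * dderiv ?g1 S e2 (z + a *\<^sub>R e1 + b *\<^sub>R e2)"
    using a(3) b(3) unfolding \<psi>'_def swap by simp
  finally show ?thesis
    using a b by (intro that[of a b]) auto
qed

(* Both mixed partials are limits, as h tends to 0 from the right, of the same second
   difference quotient. *)
lemma dderiv_commute_interior:
  assumes g: "smooth_on S g" and e1: "e1 \<in> Basis" and e2: "e2 \<in> Basis" and z: "z \<in> interior S"
  shows "dderiv (dderiv g S e1) S e2 z = dderiv (dderiv g S e2) S e1 z"
proof -
  let ?g12 = "dderiv (dderiv g S e1) S e2" and ?g21 = "dderiv (dderiv g S e2) S e1"
  obtain r where r: "r > 0" "ball z r \<subseteq> interior S"
    using z open_interior open_contains_ball by blast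
  have near: "dist (z + a *\<^sub>R e + b *\<^sub>R e') z \<le> 2 * h"
    if "e \<in> Basis" "e' \<in> Basis" "a \<in> {0..h}" "b \<in> {0..h}" for e e' a b h
  proof -
    have "dist (z + a *\<^sub>R e + b *\<^sub>R e') z = norm (a *\<^sub>R e + b *\<^sub>R e')"
      by (simp add: dist_norm)
    also have "\<dots> \<le> norm (a *\<^sub>R e) + norm (b *\<^sub>R e')"
      by (rule norm_triangle_ineq)
    finally show ?thesis using that by simp
  qed
  have ex: "\<exists>pq. dist (fst pq) z \<le> 2 * h \<and> dist (snd pq) z \<le> 2 * h \<and> ?g12 (fst pq) = ?g21 (snd pq)"
    if h: "0 < h" "2 * h < r" for h
  proof -
    have square: "z + a *\<^sub>R e + b *\<^sub>R e' \<in> interior S"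
      if "e \<in> Basis" "e' \<in> Basis" "a \<in> {0..h}" "b \<in> {0..h}" for e e' a b
      using near[OF that] h r by (auto simp: dist_commute intro!: subsetD[OF r(2)])
    obtain a1 b1 where ab1: "a1 \<in> {0..h}" "b1 \<in> {0..h}"
      "g (z + h *\<^sub>R e1 + h *\<^sub>R e2) - g (z + h *\<^sub>R e1) - g (z + h *\<^sub>R e2) + g z
         = h * h * ?g12 (z + a1 *\<^sub>R e1 + b1 *\<^sub>R e2)"
      using second_difference_mvt[OF g e1 e2 h(1) square[OF e1 e2]] by blast
    obtain a2 b2 where ab2: "a2 \<in> {0..h}" "b2 \<in> {0..h}"
      "g (z + h *\<^sub>R e2 + h *\<^sub>R e1) - g (z + h *\<^sub>R e2) - g (z + h *\<^sub>R e1) + g z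
         = h * h * ?g21 (z + a2 *\<^sub>R e2 + b2 *\<^sub>R e1)"
      using second_difference_mvt[OF g e2 e1 h(1) square[OF e2 e1]] by blast
    have swap: "z + h *\<^sub>R e2 + h *\<^sub>R e1 = z + h *\<^sub>R e1 + h *\<^sub>R e2"
      by (simp add: algebra_simps)
    from ab1(3) ab2(3)[unfolded swap]
    have "h * h * ?g12 (z + a1 *\<^sub>R e1 + b1 *\<^sub>R e2) = h * h * ?g21 (z + a2 *\<^sub>R e2 + b2 *\<^sub>R e1)"
      by linarith
    with h(1)
    have "?g12 (z + a1 *\<^sub>R e1 + b1 *\<^sub>R e2) = ?g21 (z + a2 *\<^sub>R e2 + b2 *\<^sub>R e1)"
      by simp
    then show ?thesis
      using near[OF e1 e2 ab1(1,2)] near[OF e2 e1 ab2(1,2)]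
      by (intro exI[of _ "(z + a1 *\<^sub>R e1 + b1 *\<^sub>R e2, z + a2 *\<^sub>R e2 + b2 *\<^sub>R e1)"]) simp
  qed
  define PQ where "PQ h = (SOME pq. dist (fst pq) z \<le> 2 * h \<and> dist (snd pq) z \<le> 2 * h \<and>
    ?g12 (fst pq) = ?g21 (snd pq))" for h
  have PQ: "dist (fst (PQ h)) z \<le> 2 * h \<and> dist (snd (PQ h)) z \<le> 2 * h \<and> ?g12 (fst (PQ h)) = ?g21 (snd (PQ h))"
    if "0 < h" "2 * h < r" for h
    unfolding PQ_def using ex[OF that] by (rule someI_ex)
  have lim_2h: "((\<lambda>h. 2 * h) \<longlongrightarrow> 0) (at_right (0::real))"
    by (rule tendsto_mult_right_zero[OF tendsto_ident_at])
  have small: "eventually (\<lambda>h. 0 < h \<and> 2 * h < r) (at_right (0::real))"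
    unfolding eventually_at_right_field using r(1) by (intro exI[of _ "r / 2"]) auto
  have to_z: "(R \<longlongrightarrow> z) (at_right 0)"
    if "\<And>h. 0 < h \<Longrightarrow> 2 * h < r \<Longrightarrow> dist (R h) z \<le> 2 * h" for R :: "real \<Rightarrow> 'a"
  proof (rule metric_tendsto_imp_tendsto[OF lim_2h])
    show "eventually (\<lambda>h. dist (R h) z \<le> dist (2 * h) 0) (at_right 0)"
      by (rule eventually_mono[OF small]) (use that in auto)
  qed
  have "((\<lambda>h. fst (PQ h)) \<longlongrightarrow> z) (at_right 0)" "((\<lambda>h. snd (PQ h)) \<longlongrightarrow> z) (at_right 0)"
    using PQ by (blast intro: to_z)+
  moreover have "isCont ?g12 z" "isCont ?g21 z"
    using smooth_on_dderiv[OF smooth_on_dderiv[OF g e1] e2] smooth_on_dderiv[OF smooth_on_dderiv[OF g e2] e1] z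
    by (auto intro: continuous_on_interior smooth_on_imp_continuous_on)
  ultimately have lim12: "((\<lambda>h. ?g12 (fst (PQ h))) \<longlongrightarrow> ?g12 z) (at_right 0)"
    and lim21: "((\<lambda>h. ?g21 (snd (PQ h))) \<longlongrightarrow> ?g21 z) (at_right 0)"
    by (auto intro: isCont_tendsto_compose)
  have "eventually (\<lambda>h. ?g21 (snd (PQ h)) = ?g12 (fst (PQ h))) (at_right 0)"
    by (rule eventually_mono[OF small]) (use PQ in simp)
  with lim21 have "((\<lambda>h. ?g12 (fst (PQ h))) \<longlongrightarrow> ?g21 z) (at_right 0)"
    by (rule Lim_transform_eventually)
  with lim12 show ?thesis
    by (rule tendsto_unique[OF trivial_limit_at_right_real])
qed

lemma dderiv_commute:
  assumes g: "smooth_on S g" and e1: "e1 \<in> Basis" and e2: "e2 \<in> Basis" and z: "z \<in> S"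
  shows "dderiv (dderiv g S e1) S e2 z = dderiv (dderiv g S e2) S e1 z"
proof -
  have "continuous_on (closure (interior S))
      (\<lambda>w. dderiv (dderiv g S e1) S e2 w - dderiv (dderiv g S e2) S e1 w)"
    unfolding closure_interior
    by (intro continuous_on_diff smooth_on_imp_continuous_on smooth_on_dderiv g e1 e2)
  then have "dderiv (dderiv g S e1) S e2 z - dderiv (dderiv g S e2) S e1 z = 0"
    by (rule continuous_constant_on_closure)
      (use dderiv_commute_interior[OF g e1 e2] z closure_interior in auto)
  then show ?thesis by simp
qed

end

section \<open>Contraction with an inverse matrix\<close>

lemma matrix_inv_contract:
  fixes M :: "real^'n^'n"
  assumes "invertible M"
  shows "(\<Sum>m\<in>UNIV. M $ m $ i * (\<Sum>j\<in>UNIV. matrix_inv M $ j $ m * X j)) = X i"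
proof -
  have inv: "matrix_inv M ** M = mat 1"
    using assms unfolding invertible_def matrix_inv_def by (rule someI2_ex) auto
  have "(\<Sum>m\<in>UNIV. M $ m $ i * (\<Sum>j\<in>UNIV. matrix_inv M $ j $ m * X j))
      = (((\<chi> j. X j) v* matrix_inv M) v* M) $ i"
    by (simp add: vector_matrix_mult_def mult.commute)
  also have "\<dots> = X i"
    by (simp add: vector_matrix_mul_assoc inv)
  finally show ?thesis .
qed

lemma sum_mult_double_sum:
  fixes B :: "'m \<Rightarrow> 'a::comm_semiring_0"
  shows "(\<Sum>m\<in>M. B m * (\<Sum>q\<in>Q. \<Sum>k\<in>K. C q k m * D q k))
    = (\<Sum>q\<in>Q. \<Sum>k\<in>K. (\<Sum>m\<in>M. B m * C q k m) * D q k)"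
proof -
  have "(\<Sum>m\<in>M. B m * (\<Sum>q\<in>Q. \<Sum>k\<in>K. C q k m * D q k))
      = (\<Sum>m\<in>M. \<Sum>q\<in>Q. \<Sum>k\<in>K. B m * C q k m * D q k)"
    by (simp add: sum_distrib_left mult.assoc)
  also have "\<dots> = (\<Sum>q\<in>Q. \<Sum>m\<in>M. \<Sum>k\<in>K. B m * C q k m * D q k)"
    by (rule sum.swap)
  also have "\<dots> = (\<Sum>q\<in>Q. \<Sum>k\<in>K. \<Sum>m\<in>M. B m * C q k m * D q k)"
    by (rule sum.cong[OF refl], rule sum.swap)
  also have "\<dots> = (\<Sum>q\<in>Q. \<Sum>k\<in>K. (\<Sum>m\<in>M. B m * C q k m) * D q k)"
    by (simp add: sum_distrib_right)
  finally show ?thesis .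
qed

section \<open>Fields on space-time and the operator \<Gamma>\<close>

lemma Basis_space_time:
  "(e :: (real^3) \<times> real) \<in> Basis \<longleftrightarrow> (\<exists>j. e = (axis j 1, 0)) \<or> e = (0, 1)"
  by (auto simp: Basis_prod_def Basis_vec_def)

lemma space_in_Basis [simp]: "((axis j 1, 0) :: (real^3) \<times> real) \<in> Basis"
  and time_in_Basis [simp]: "((0, 1) :: (real^3) \<times> real) \<in> Basis"
  by (auto simp: Basis_space_time)

lemma mem_dom [simp]: "(x, t) \<in> dom T \<longleftrightarrow> t \<in> {0..T}"
  by (simp add: dom_def)

locale space_time =
  fixes T :: real
  assumes T_pos: "T > 0"

sublocale space_time \<subseteq> dderiv_domain "dom T"
proof
  show "closure (interior (dom T)) = dom T"
    using T_pos by (simp add: dom_def interior_Times closure_Times)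
  fix z e
  assume z: "z \<in> dom T" and e: "(e :: (real^3) \<times> real) \<in> Basis"
  obtain x t where zt: "z = (x, t)" by fastforce
  from e consider j where "e = (axis j 1, 0)" | "e = (0, 1)"
    by (auto simp: Basis_space_time)
  then show "at 0 within {h. z + h *\<^sub>R e \<in> dom T} \<noteq> bot"
  proof cases
    case 1
    with z have "{h. z + h *\<^sub>R e \<in> dom T} = UNIV" by (auto simp: zt)
    then show ?thesis by simp
  next
    case 2
    with z have "{h. z + h *\<^sub>R e \<in> dom T} = {-t..T-t}" "-t < T - t" "0 \<in> {-t..T-t}"
      using T_pos by (auto simp: zt)
    then show ?thesis by (simp add: trivial_limit_within)
  qed
qed

context space_time
begin

lemma smooth_s_iff: "smooth_s T F \<longleftrightarrow> smooth_on (dom T) (\<lambda>z. F (fst z) (snd z))"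
  by (simp add: smooth_s_def case_prod_unfold)

lemma dx_eq_dderiv: "dx T j F x t = dderiv (\<lambda>z. F (fst z) (snd z)) (dom T) (axis j 1, 0) (x, t)"
  by (simp add: dx_def case_prod_unfold)

lemma dt_eq_dderiv: "dt T F x t = dderiv (\<lambda>z. F (fst z) (snd z)) (dom T) (0, 1) (x, t)"
  by (simp add: dt_def case_prod_unfold)

lemma smooth_s_dx: "smooth_s T F \<Longrightarrow> smooth_s T (dx T j F)"
  and smooth_s_dt: "smooth_s T F \<Longrightarrow> smooth_s T (dt T F)"
  by (simp_all add: smooth_s_iff dx_eq_dderiv dt_eq_dderiv smooth_on_dderiv)

lemma smooth_s_add: "smooth_s T F \<Longrightarrow> smooth_s T G \<Longrightarrow> smooth_s T (\<lambda>x t. F x t + G x t)"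
  and smooth_s_diff: "smooth_s T F \<Longrightarrow> smooth_s T G \<Longrightarrow> smooth_s T (\<lambda>x t. F x t - G x t)"
  and smooth_s_mult: "smooth_s T F \<Longrightarrow> smooth_s T G \<Longrightarrow> smooth_s T (\<lambda>x t. F x t * G x t)"
  and smooth_s_const: "smooth_s T (\<lambda>x t. c)"
  by (simp_all add: smooth_s_iff smooth_on_add smooth_on_diff smooth_on_mult smooth_on_const)

lemma smooth_s_sum:
  "finite K \<Longrightarrow> (\<And>k. k \<in> K \<Longrightarrow> smooth_s T (F k)) \<Longrightarrow> smooth_s T (\<lambda>x t. \<Sum>k\<in>K. F k x t)"
  using smooth_on_sum[of K "\<lambda>k z. F k (fst z) (snd z)"] by (simp add: smooth_s_iff)

lemma bounded_linear_coord: "bounded_linear (\<lambda>z :: (real^3) \<times> real. fst z $ m)"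
  by (intro bounded_linear_compose[OF bounded_linear_vec_nth bounded_linear_fst])

lemma smooth_s_coord: "smooth_s T (\<lambda>x t. x $ m)"
  using smooth_on_linear[OF bounded_linear_coord] by (simp add: smooth_s_iff)

lemma
  assumes "smooth_s T F" "smooth_s T G" "t \<in> {0..T}"
  shows dx_add: "dx T j (\<lambda>x t. F x t + G x t) x t = dx T j F x t + dx T j G x t"
    and dt_add: "dt T (\<lambda>x t. F x t + G x t) x t = dt T F x t + dt T G x t"
    and dx_diff: "dx T j (\<lambda>x t. F x t - G x t) x t = dx T j F x t - dx T j G x t"
    and dt_diff: "dt T (\<lambda>x t. F x t - G x t) x t = dt T F x t - dt T G x t"
    and dx_mult: "dx T j (\<lambda>x t. F x t * G x t) x t = F x t * dx T j G x t + dx T j F x t * G x t"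
    and dt_mult: "dt T (\<lambda>x t. F x t * G x t) x t = F x t * dt T G x t + dt T F x t * G x t"
  using assms
  by (simp_all add: smooth_s_iff dx_eq_dderiv dt_eq_dderiv dderiv_add dderiv_diff dderiv_mult)

lemma dx_sum:
  "(\<And>k. k \<in> K \<Longrightarrow> smooth_s T (F k)) \<Longrightarrow> t \<in> {0..T} \<Longrightarrow>
    dx T j (\<lambda>x t. \<Sum>k\<in>K. F k x t) x t = (\<Sum>k\<in>K. dx T j (F k) x t)"
  using dderiv_sum[of K "\<lambda>k z. F k (fst z) (snd z)"] by (simp add: smooth_s_iff dx_eq_dderiv)

lemma
  assumes "t \<in> {0..T}"
  shows dx_const: "dx T j (\<lambda>x t. c) x t = 0"
    and dt_const: "dt T (\<lambda>x t. c) x t = 0"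
  using assms by (simp_all add: dx_eq_dderiv dt_eq_dderiv dderiv_const)

lemma smooth_s_divide_const: "smooth_s T F \<Longrightarrow> smooth_s T (\<lambda>x t. F x t / a)"
  using smooth_s_mult[OF _ smooth_s_const, of F "1 / a"] by simp

lemma dx_divide_const:
  "smooth_s T F \<Longrightarrow> t \<in> {0..T} \<Longrightarrow> dx T j (\<lambda>x t. F x t / a) x t = dx T j F x t / a"
  using dx_mult[OF _ smooth_s_const, of F t j "1 / a" x] dx_const[of t j "1 / a" x] by simp

lemma
  assumes "t \<in> {0..T}"
  shows dx_coord: "dx T j (\<lambda>x t. x $ m) x t = (if m = j then 1 else 0)"
    and dt_coord: "dt T (\<lambda>x t. x $ m) x t = 0"
proof -
  have "dx T j (\<lambda>x t. x $ m) x t = axis j 1 $ m" "dt T (\<lambda>x t. x $ m) x t = 0"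
    using assms by (simp_all add: dx_eq_dderiv dt_eq_dderiv dderiv_linear[OF bounded_linear_coord])
  then show "dx T j (\<lambda>x t. x $ m) x t = (if m = j then 1 else 0)" "dt T (\<lambda>x t. x $ m) x t = 0"
    by (simp_all add: axis_def)
qed

lemma
  assumes "\<And>y s. s \<in> {0..T} \<Longrightarrow> F y s = G y s" "t \<in> {0..T}"
  shows dx_cong: "dx T j F x t = dx T j G x t"
    and dt_cong: "dt T F x t = dt T G x t"
  using assms unfolding dx_eq_dderiv dt_eq_dderiv
  by (auto intro!: dderiv_cong simp: dom_def)

lemma dx_uncurried: "(\<lambda>z. dx T j F (fst z) (snd z)) = dderiv (\<lambda>z. F (fst z) (snd z)) (dom T) (axis j 1, 0)"
  and dt_uncurried: "(\<lambda>z. dt T F (fst z) (snd z)) = dderiv (\<lambda>z. F (fst z) (snd z)) (dom T) (0, 1)"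
  by (simp_all add: dx_eq_dderiv dt_eq_dderiv)

lemma
  assumes "smooth_s T F" "t \<in> {0..T}"
  shows dx_commute: "dx T i (dx T j F) x t = dx T j (dx T i F) x t"
    and dx_dt_commute: "dx T i (dt T F) x t = dt T (dx T i F) x t"
  using assms unfolding dx_eq_dderiv[of _ "dx T _ F"] dx_eq_dderiv[of _ "dt T F"]
    dt_eq_dderiv[of "dx T _ F"] dx_uncurried dt_uncurried smooth_s_iff
  by (auto intro: dderiv_commute)


lemmas smooth_s_intros =
  smooth_s_add smooth_s_diff smooth_s_mult smooth_s_const smooth_s_sum smooth_s_dx smooth_s_dt
  smooth_s_coord smooth_s_divide_const

lemma smooth_v_comp: "smooth_v T w \<Longrightarrow> smooth_s T (comp w i)"
  by (simp add: smooth_v_def comp_def)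

lemma Gam_expand:
  "Gam T \<nu> u F x t =
    dt T F x t + (\<Sum>k\<in>UNIV. u x t $ k * dx T k F x t) - \<nu> * (\<Sum>k\<in>UNIV. dx T k (dx T k F) x t)"
  by (simp add: Gam_def lap_def)

lemma
  assumes F: "smooth_s T F" and G: "smooth_s T G" and t: "t \<in> {0..T}"
  shows dx_dx_add: "dx T k (dx T j (\<lambda>x t. F x t + G x t)) x t = dx T k (dx T j F) x t + dx T k (dx T j G) x t"
    and dx_dx_diff: "dx T k (dx T j (\<lambda>x t. F x t - G x t)) x t = dx T k (dx T j F) x t - dx T k (dx T j G) x t"
    and dx_dx_mult: "dx T k (dx T j (\<lambda>x t. F x t * G x t)) x t =
      F x t * dx T k (dx T j G) x t + dx T j F x t * dx T k G x t + dx T k F x t * dx T j G x t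
        + dx T k (dx T j F) x t * G x t"
proof -
  have "dx T k (dx T j (\<lambda>x t. F x t + G x t)) x t = dx T k (\<lambda>x t. dx T j F x t + dx T j G x t) x t"
    "dx T k (dx T j (\<lambda>x t. F x t - G x t)) x t = dx T k (\<lambda>x t. dx T j F x t - dx T j G x t) x t"
    "dx T k (dx T j (\<lambda>x t. F x t * G x t)) x t =
      dx T k (\<lambda>x t. F x t * dx T j G x t + dx T j F x t * G x t) x t"
    using F G t by (auto intro!: dx_cong simp: dx_add dx_diff dx_mult)
  then show "dx T k (dx T j (\<lambda>x t. F x t + G x t)) x t = dx T k (dx T j F) x t + dx T k (dx T j G) x t"
    "dx T k (dx T j (\<lambda>x t. F x t - G x t)) x t = dx T k (dx T j F) x t - dx T k (dx T j G) x t"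
    "dx T k (dx T j (\<lambda>x t. F x t * G x t)) x t =
      F x t * dx T k (dx T j G) x t + dx T j F x t * dx T k G x t + dx T k F x t * dx T j G x t
        + dx T k (dx T j F) x t * G x t"
    using F G t by (simp_all add: dx_add dx_diff dx_mult smooth_s_intros algebra_simps)
qed

lemma
  assumes "smooth_s T F" "smooth_s T G" "t \<in> {0..T}"
  shows Gam_add: "Gam T \<nu> u (\<lambda>x t. F x t + G x t) x t = Gam T \<nu> u F x t + Gam T \<nu> u G x t"
    and Gam_diff: "Gam T \<nu> u (\<lambda>x t. F x t - G x t) x t = Gam T \<nu> u F x t - Gam T \<nu> u G x t"
    and Gam_mult: "Gam T \<nu> u (\<lambda>x t. F x t * G x t) x t =
      F x t * Gam T \<nu> u G x t + G x t * Gam T \<nu> u F x t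
        - 2 * \<nu> * (\<Sum>k\<in>UNIV. dx T k F x t * dx T k G x t)"
  using assms
  by (simp_all add: Gam_expand dt_add dt_diff dt_mult dx_add dx_diff dx_mult dx_dx_add dx_dx_diff
      dx_dx_mult sum.distrib sum_subtractf sum_distrib_left algebra_simps)

lemma Gam_cong:
  assumes "\<And>y s. s \<in> {0..T} \<Longrightarrow> F y s = G y s" "t \<in> {0..T}"
  shows "Gam T \<nu> u F x t = Gam T \<nu> u G x t"
proof -
  have "dx T k (dx T k F) x t = dx T k (dx T k G) x t" "dx T k F x t = dx T k G x t"
    "dt T F x t = dt T G x t" for k
    using assms by (auto intro!: dx_cong dt_cong)
  then show ?thesis by (simp add: Gam_expand)
qed

lemma
  assumes "t \<in> {0..T}"
  shows Gam_const: "Gam T \<nu> u (\<lambda>x t. c) x t = 0"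
    and Gam_coord: "Gam T \<nu> u (\<lambda>x t. x $ m) x t = u x t $ m"
proof -
  have "dx T k (dx T k (\<lambda>x t. c)) x t = dx T k (\<lambda>x t. 0) x t" for k c
    using assms by (intro dx_cong) (simp_all add: dx_const)
  moreover have "dx T k (dx T k (\<lambda>x t. x $ m)) x t = dx T k (\<lambda>x t. if m = k then 1 else 0) x t" for k
    using assms by (intro dx_cong) (simp_all add: dx_coord)
  ultimately have "dx T k (dx T k (\<lambda>x t. c)) x t = 0" "dx T k (dx T k (\<lambda>x t. x $ m)) x t = 0" for k
    using dx_const[OF assms] by simp_all
  then show "Gam T \<nu> u (\<lambda>x t. c) x t = 0" "Gam T \<nu> u (\<lambda>x t. x $ m) x t = u x t $ m"
    using assms by (simp_all add: Gam_expand dt_const dx_const dt_coord dx_coord if_distrib cong: if_cong)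
qed

lemma Gam_sum:
  assumes "finite K" "\<And>m. m \<in> K \<Longrightarrow> smooth_s T (F m)" "t \<in> {0..T}"
  shows "Gam T \<nu> u (\<lambda>x t. \<Sum>m\<in>K. F m x t) x t = (\<Sum>m\<in>K. Gam T \<nu> u (F m) x t)"
  using assms(1,2)
proof (induction K rule: finite_induct)
  case empty
  then show ?case using Gam_const[OF assms(3)] by simp
next
  case (insert a K)
  then show ?case
    using Gam_add[OF _ smooth_s_sum assms(3), of "F a" K F] by simp
qed

lemma smooth_s_Gam:
  assumes "smooth_v T u" "smooth_s T F"
  shows "smooth_s T (Gam T \<nu> u F)"
proof -
  have "Gam T \<nu> u F = (\<lambda>x t. dt T F x t + (\<Sum>k\<in>UNIV. comp u k x t * dx T k F x t)
      - \<nu> * (\<Sum>k\<in>UNIV. dx T k (dx T k F) x t))"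
    by (simp add: fun_eq_iff Gam_expand comp_def)
  then show ?thesis
    using assms by (simp add: smooth_s_intros smooth_v_comp)
qed

lemma Gam_dx:
  assumes u: "smooth_v T u" and F: "smooth_s T F" and t: "t \<in> {0..T}"
  shows "dx T i (Gam T \<nu> u F) x t =
    Gam T \<nu> u (dx T i F) x t + (\<Sum>k\<in>UNIV. dx T i (comp u k) x t * dx T k F x t)"
proof -
  have Gam_fun: "Gam T \<nu> u F = (\<lambda>x t. dt T F x t + (\<Sum>k\<in>UNIV. comp u k x t * dx T k F x t)
      - \<nu> * (\<Sum>k\<in>UNIV. dx T k (dx T k F) x t))"
    by (simp add: fun_eq_iff Gam_expand comp_def)
  have "dx T i (Gam T \<nu> u F) x t = dx T i (dt T F) x t
      + (\<Sum>k\<in>UNIV. comp u k x t * dx T i (dx T k F) x t + dx T i (comp u k) x t * dx T k F x t)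
      - \<nu> * (\<Sum>k\<in>UNIV. dx T i (dx T k (dx T k F)) x t)"
    unfolding Gam_fun using u F t
    by (simp add: dx_add dx_diff dx_mult dx_sum dx_const smooth_s_intros smooth_v_comp)
  also have "\<dots> = Gam T \<nu> u (dx T i F) x t + (\<Sum>k\<in>UNIV. dx T i (comp u k) x t * dx T k F x t)"
  proof -
    have "dx T i (dx T k F) x t = dx T k (dx T i F) x t" for k
      using F t by (rule dx_commute)
    moreover have "dx T i (dx T k (dx T k F)) x t = dx T k (dx T k (dx T i F)) x t" for k
    proof -
      have "dx T i (dx T k (dx T k F)) x t = dx T k (dx T i (dx T k F)) x t"
        using smooth_s_dx[OF F] t by (rule dx_commute)
      also have "\<dots> = dx T k (dx T k (dx T i F)) x t"
        using F t by (intro dx_cong) (simp_all add: dx_commute)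
      finally show ?thesis .
    qed
    ultimately show ?thesis
      using F t by (simp add: Gam_expand dx_dt_commute sum.distrib comp_def algebra_simps)
  qed
  finally show ?thesis .
qed


section \<open>The equation for the velocity\<close>

lemma Gam_dx_transported:
  assumes u: "smooth_v T u" and F: "smooth_s T F"
    and transport: "\<And>y s. s \<in> {0..T} \<Longrightarrow> Gam T \<nu> u F y s = 0" and t: "t \<in> {0..T}"
  shows "Gam T \<nu> u (dx T i F) x t = - (\<Sum>k\<in>UNIV. dx T i (comp u k) x t * dx T k F x t)"
proof -
  have "dx T i (Gam T \<nu> u F) x t = dx T i (\<lambda>x t. 0) x t"
    using transport t by (intro dx_cong) auto
  then have "dx T i (Gam T \<nu> u F) x t = 0"
    using dx_const[OF t] by simp
  then show ?thesis
    using Gam_dx[OF u F t, of i \<nu>] by simp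
qed

lemma Gam_v_contracted:
  fixes A v f :: vfield
  assumes A: "\<And>m. smooth_s T (comp A m)" and t: "t \<in> {0..T}"
    and inv: "invertible (gradm T A x t)"
    and hv: "\<And>m. Gam T \<nu> u (comp v m) x t =
      2 * \<nu> * (\<Sum>q\<in>UNIV. \<Sum>k\<in>UNIV.
          (\<Sum>j\<in>UNIV. matrix_inv (gradm T A x t) $ j $ m * dx T j (dx T k (comp A q)) x t)
            * dx T k (comp v q) x t)
      + (\<Sum>j\<in>UNIV. matrix_inv (gradm T A x t) $ j $ m * f x t $ j)"
  shows "(\<Sum>m\<in>UNIV. dx T i (comp A m) x t * Gam T \<nu> u (comp v m) x t) =
    2 * \<nu> * (\<Sum>q\<in>UNIV. \<Sum>k\<in>UNIV. dx T k (dx T i (comp A q)) x t * dx T k (comp v q) x t)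
      + f x t $ i"
proof -
  have contract: "(\<Sum>m\<in>UNIV. dx T i (comp A m) x t * (\<Sum>j\<in>UNIV. matrix_inv (gradm T A x t) $ j $ m * X j))
      = X i" for X
    using matrix_inv_contract[OF inv, of i X] by (simp add: gradm_def)
  have "(\<Sum>m\<in>UNIV. dx T i (comp A m) x t * Gam T \<nu> u (comp v m) x t) =
      2 * \<nu> * (\<Sum>q\<in>UNIV. \<Sum>k\<in>UNIV. dx T i (dx T k (comp A q)) x t * dx T k (comp v q) x t)
        + f x t $ i"
    by (simp add: hv distrib_left sum.distrib mult.left_commute[of _ "2 * \<nu>"] sum_mult_double_sum
        flip: sum_distrib_left) (simp add: contract)
  then show ?thesis
    using A t by (simp add: dx_commute)
qed

lemma Gam_velocity:
  fixes A v :: "3 \<Rightarrow> sfield"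
  assumes u: "smooth_v T u" and A: "\<And>m. smooth_s T (A m)" and v: "\<And>m. smooth_s T (v m)"
    and n: "smooth_s T n"
    and transport: "\<And>m y s. s \<in> {0..T} \<Longrightarrow> Gam T \<nu> u (A m) y s = 0"
    and velocity: "\<And>k y s. s \<in> {0..T} \<Longrightarrow>
      u y s $ k = (\<Sum>m\<in>UNIV. dx T k (A m) y s * v m y s) - dx T k n y s"
    and t: "t \<in> {0..T}"
    and forcing: "(\<Sum>m\<in>UNIV. dx T i (A m) x t * Gam T \<nu> u (v m) x t) =
      2 * \<nu> * (\<Sum>m\<in>UNIV. \<Sum>k\<in>UNIV. dx T k (dx T i (A m)) x t * dx T k (v m) x t) + g"
  shows "Gam T \<nu> u (comp u i) x t =
    g - (\<Sum>k\<in>UNIV. u x t $ k * dx T i (comp u k) x t) - dx T i (Gam T \<nu> u n) x t"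
proof -
  have "Gam T \<nu> u (comp u i) x t =
      Gam T \<nu> u (\<lambda>x t. (\<Sum>m\<in>UNIV. dx T i (A m) x t * v m x t) - dx T i n x t) x t"
    using velocity t by (intro Gam_cong) (simp_all add: comp_def)
  also have "\<dots> = (\<Sum>m\<in>UNIV. Gam T \<nu> u (\<lambda>x t. dx T i (A m) x t * v m x t) x t)
      - Gam T \<nu> u (dx T i n) x t"
    using A v n t by (simp add: Gam_diff Gam_sum smooth_s_intros)
  also have "\<dots> = (\<Sum>m\<in>UNIV. dx T i (A m) x t * Gam T \<nu> u (v m) x t)
      + (\<Sum>m\<in>UNIV. v m x t * Gam T \<nu> u (dx T i (A m)) x t)
      - 2 * \<nu> * (\<Sum>m\<in>UNIV. \<Sum>k\<in>UNIV. dx T k (dx T i (A m)) x t * dx T k (v m) x t)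
      - Gam T \<nu> u (dx T i n) x t"
    using A v t by (simp add: Gam_mult smooth_s_intros sum.distrib sum_subtractf sum_distrib_left)
  also have "(\<Sum>m\<in>UNIV. v m x t * Gam T \<nu> u (dx T i (A m)) x t)
      = - (\<Sum>k\<in>UNIV. dx T i (comp u k) x t * (u x t $ k + dx T k n x t))"
  proof -
    have "(\<Sum>m\<in>UNIV. v m x t * Gam T \<nu> u (dx T i (A m)) x t)
        = - (\<Sum>m\<in>UNIV. \<Sum>k\<in>UNIV. dx T i (comp u k) x t * (dx T k (A m) x t * v m x t))"
      using Gam_dx_transported[OF u A transport t]
      by (simp add: sum_distrib_left sum_negf algebra_simps)
    also have "\<dots> = - (\<Sum>k\<in>UNIV. dx T i (comp u k) x t * (\<Sum>m\<in>UNIV. dx T k (A m) x t * v m x t))"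
      by (subst sum.swap) (simp add: sum_distrib_left)
    also have "\<dots> = - (\<Sum>k\<in>UNIV. dx T i (comp u k) x t * (u x t $ k + dx T k n x t))"
      using velocity[OF t] by simp
    finally show ?thesis .
  qed
  also have "Gam T \<nu> u (dx T i n) x t =
      dx T i (Gam T \<nu> u n) x t - (\<Sum>k\<in>UNIV. dx T i (comp u k) x t * dx T k n x t)"
    using Gam_dx[OF u n t, of i \<nu>] by simp
  finally show ?thesis
    using forcing by (simp add: distrib_left sum.distrib algebra_simps)
qed

lemma dx_pressure:
  assumes u: "smooth_v T u" and n: "smooth_s T n" and t: "t \<in> {0..T}"
  shows "dx T i (\<lambda>x t. Gam T \<nu> u n x t + (norm (u x t))\<^sup>2 / 2 + c) x t =
    dx T i (Gam T \<nu> u n) x t + (\<Sum>k\<in>UNIV. u x t $ k * dx T i (comp u k) x t)"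
proof -
  define sq where "sq x t = (\<Sum>k\<in>UNIV. comp u k x t * comp u k x t)" for x t
  have sq: "smooth_s T sq"
    unfolding sq_def using u by (simp add: smooth_s_intros smooth_v_comp)
  have "(\<lambda>x t. Gam T \<nu> u n x t + (norm (u x t))\<^sup>2 / 2 + c)
      = (\<lambda>x t. Gam T \<nu> u n x t + sq x t / 2 + c)"
    by (simp add: fun_eq_iff sq_def power2_norm_eq_inner inner_vec_def comp_def)
  moreover have "dx T i sq x t = 2 * (\<Sum>k\<in>UNIV. comp u k x t * dx T i (comp u k) x t)"
    unfolding sq_def using u t
    by (simp add: dx_sum dx_mult smooth_s_intros smooth_v_comp sum_distrib_left algebra_simps)
  ultimately show ?thesis
    using u n t sq by (simp add: dx_add dx_divide_const dx_const smooth_s_intros smooth_s_Gam comp_def)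
qed

end

theorem proposition1:
  fixes \<nu> T c :: real and u l v f A :: vfield and n p :: sfield and Q :: "real^3 \<Rightarrow> real \<Rightarrow> real^3^3"
    and C :: "3 \<Rightarrow> 3 \<Rightarrow> 3 \<Rightarrow> sfield"
  assumes nu_pos: "\<nu> > 0" and T_pos: "T > 0"
    and smooth: "smooth_v T u" "smooth_v T l" "smooth_v T v" "smooth_s T n" "smooth_v T f"
    and A_def: "A = (\<lambda>x t. x + l x t)"
    and inv: "\<And>x t. t \<in> {0..T} \<Longrightarrow> invertible (gradm T A x t)"
    and Q_def: "Q = (\<lambda>x t. matrix_inv (gradm T A x t))"
    and C_def: "C = (\<lambda>m k i x t. \<Sum>j\<in>UNIV. Q x t $ j $ i * dx T j (dx T k (comp A m)) x t)"
    and hu: "\<And>x t i. t \<in> {0..T} \<Longrightarrow>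
               u x t $ i = (\<Sum>m\<in>UNIV. dx T i (comp A m) x t * v x t $ m) - dx T i n x t"
    and hl: "\<And>x t i. t \<in> {0..T} \<Longrightarrow>
               Gam T \<nu> u (comp l i) x t + u x t $ i = 0"
    and hv: "\<And>x t i. t \<in> {0..T} \<Longrightarrow>
               Gam T \<nu> u (comp v i) x t =
                 2 * \<nu> * (\<Sum>m\<in>UNIV. \<Sum>k\<in>UNIV. C m k i x t * dx T k (comp v m) x t)
                 + (\<Sum>j\<in>UNIV. Q x t $ j $ i * f x t $ j)"
    and p_def: "p = (\<lambda>x t. Gam T \<nu> u n x t + (norm (u x t))\<^sup>2 / 2 + c)"
  shows "\<And>x t i. t \<in> {0..T} \<Longrightarrow>
           dt T (comp u i) x t + (\<Sum>k\<in>UNIV. u x t $ k * dx T k (comp u i) x t)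
             - \<nu> * lap T (comp u i) x t + dx T i p x t = f x t $ i"
proof -
  interpret space_time T
    using T_pos by unfold_locales
  fix x t i
  assume t: "t \<in> {0..T}"
  have A_comp: "comp A m = (\<lambda>x t. x $ m + comp l m x t)" for m
    by (simp add: A_def comp_def)
  have sA: "smooth_s T (comp A m)" for m
    unfolding A_comp using smooth(2) by (simp add: smooth_s_intros smooth_v_comp)
  have transport: "Gam T \<nu> u (comp A m) y s = 0" if "s \<in> {0..T}" for m y s
  proof -
    have "Gam T \<nu> u (comp A m) y s = u y s $ m + Gam T \<nu> u (comp l m) y s"
      unfolding A_comp using that smooth(2)
      by (simp add: Gam_add Gam_coord smooth_s_intros smooth_v_comp)
    then show ?thesis
      using hl[OF that] by (metis add.commute)
  qed
  have "Gam T \<nu> u (comp u i) x t =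
      f x t $ i - (\<Sum>k\<in>UNIV. u x t $ k * dx T i (comp u k) x t) - dx T i (Gam T \<nu> u n) x t"
  proof (rule Gam_velocity[OF smooth(1) sA smooth_v_comp[OF smooth(3)] smooth(4) transport _ t])
    show "u y s $ k = (\<Sum>m\<in>UNIV. dx T k (comp A m) y s * comp v m y s) - dx T k n y s"
      if "s \<in> {0..T}" for k y s
      using hu[OF that] by (simp add: comp_def)
    show "(\<Sum>m\<in>UNIV. dx T i (comp A m) x t * Gam T \<nu> u (comp v m) x t) =
        2 * \<nu> * (\<Sum>m\<in>UNIV. \<Sum>k\<in>UNIV. dx T k (dx T i (comp A m)) x t * dx T k (comp v m) x t)
          + f x t $ i"
      using hv[OF t] by (intro Gam_v_contracted[OF sA t inv[OF t]]) (simp add: C_def Q_def)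
  qed
  moreover have "dx T i p x t = dx T i (Gam T \<nu> u n) x t + (\<Sum>k\<in>UNIV. u x t $ k * dx T i (comp u k) x t)"
    unfolding p_def by (rule dx_pressure[OF smooth(1,4) t])
  ultimately show "dt T (comp u i) x t + (\<Sum>k\<in>UNIV. u x t $ k * dx T k (comp u i) x t)
      - \<nu> * lap T (comp u i) x t + dx T i p x t = f x t $ i"
    by (simp add: Gam_def)
qed

end
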